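(* For every integer $n\ge 0$, \[ \int_{0}^{1}\frac{1-x}{x}\,{}_{H}w_{n+1}(-x)\,dx=(-1)^{n}\frac{n-1}{2}B_{n}. \] Moreover, for integers $n\ge 0$, $m\ge 1$ with $n+m$ even, \[ \int_{0}^{1}\frac{1-x}{x}\,{}_{H}w_{n+1}(-x)\,w_{m}(-x)\,dx=(-1)^{n}\frac{n}{2}B_{n+m}. \]
   Context: $\genfrac{\{}{\}}{0pt}{}{n}{k}$ denotes the Stirling numbers of the second kind. The geometric polynomials are $w_n(x)=\sum_{k=0}^{n}\genfrac{\{}{\}}{0pt}{}{n}{k}k!\,x^k$. With $H_k=\sum_{i=1}^k 1/i$, the harmonic geometric polynomials are ${}_{H}w_n(x)=\sum_{k=1}^{n}\genfrac{\{}{\}}{0pt}{}{n}{k}k!\,H_k\,x^k$. $B_n$ are the Bernoulli numbers, $\sum_{n\ge0}B_n t^n/n!=t/(e^t-1)$ (so $B_1=-1/2$). *)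

theory Defs
  imports "HOL-Analysis.Analysis" "HOL-Combinatorics.Stirling"
    "HOL-Computational_Algebra.Formal_Power_Series"
begin

definition geom_poly :: "nat \<Rightarrow> real \<Rightarrow> real" where
  "geom_poly n x = (\<Sum>k=0..n. real (Stirling n k) * fact k * x ^ k)"

definition harm_geom_poly :: "nat \<Rightarrow> real \<Rightarrow> real" where
  "harm_geom_poly n x = (\<Sum>k=1..n. real (Stirling n k) * fact k * harm k * x ^ k)"

text \<open>Bernoulli numbers via the exponential generating function t/(e^t - 1), so B_1 = -1/2.\<close>
definition bernoulli_num :: "nat \<Rightarrow> real" where
  "bernoulli_num n = fact n * fps_nth (fps_X / (fps_exp 1 - 1)) n"

end

theory Submission
  imports Defs
begin

text \<open>
  Under the substitution z = 1 - e^t the weights of the geometric polynomials become Taylor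
  coefficients: n! [t^n] (1 - e^t)^k = (-1)^k k! S(n,k).  Integrating w_n(-x) termwise against
  x^k, 1 or (1 - x)/x therefore gives n! [t^n] C(1 - e^t) for an elementary series C, and for
  C(z) = -ln(1 - z)/z and its harmonic analogues C(1 - e^t) is explicit in terms of t/(e^t - 1).

  Products are handled by integration by parts.  The recurrence
  w_{n+1}(y) = y (1 + y) w_n'(y) + y w_n(y) moves one index from w_a(-x) to w_b(x - 1), so that
  the integral of w_a(-x) w_b(x - 1) is B_{a+b}; for the harmonic polynomials the same step
  produces the extra integral of x w_a(-x) w_b(x - 1).  The reflection
  x w_{k+1}(x - 1) = (-1)^k (1 - x) w_{k+1}(-x) turns (1 - x)/x w_m(-x) into +-w_m(x - 1), and
  together with the symmetry x -> 1 - x of [0,1] it evaluates the extra integrals as B_{a+b}/2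
  for even a + b and shows that the odd Bernoulli numbers vanish.
\<close>

definition fps_expm1 :: "'a::field_char_0 fps" where
  "fps_expm1 = fps_exp 1 - 1"

lemma fps_nth_expm1_0 [simp]: "fps_nth fps_expm1 0 = 0"
  by (simp add: fps_expm1_def)

lemma fps_deriv_expm1: "fps_deriv fps_expm1 = 1 + fps_expm1"
  by (simp add: fps_expm1_def)

lemma fps_expm1_nonzero: "fps_expm1 \<noteq> (0 :: 'a::field_char_0 fps)"
proof
  assume "fps_expm1 = (0 :: 'a fps)"
  then have "fps_nth fps_expm1 1 = (0 :: 'a)" by simp
  then show False by (simp add: fps_expm1_def)
qed

lemma fps_nth_Suc_conv_deriv:
  "fps_nth f (Suc n) = fps_nth (fps_deriv f) n / of_nat (Suc n)" for f :: "'a::field_char_0 fps"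
  by (simp del: of_nat_Suc)

lemma fps_nth_expm1_power:
  "fps_nth (fps_expm1 ^ k :: 'a::field_char_0 fps) n = of_nat (Stirling n k) * fact k / fact n"
proof (induction n arbitrary: k)
  case 0
  then show ?case by (cases k) (auto simp: fps_nth_power_0)
next
  case (Suc n)
  show ?case
  proof (cases k)
    case 0
    then show ?thesis by simp
  next
    case (Suc j)
    have "fps_deriv (fps_expm1 ^ k :: 'a fps) = of_nat (Suc j) * (fps_expm1 ^ j + fps_expm1 ^ Suc j)"
      using fps_deriv_power'[of fps_expm1 "Suc j"] Suc by (simp add: fps_deriv_expm1 algebra_simps)
    then have "fps_nth (fps_expm1 ^ k :: 'a fps) (Suc n)
        = of_nat (Suc j) * (fps_nth (fps_expm1 ^ j) n + fps_nth (fps_expm1 ^ Suc j) n) / of_nat (Suc n)"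
      by (simp only: fps_nth_Suc_conv_deriv fps_mult_left_const_nth fps_add_nth fps_of_nat[symmetric])
    also have "\<dots> = of_nat (Stirling (Suc n) k) * fact k / fact (Suc n)"
      unfolding Suc.IH using Suc by (simp add: field_simps fact_Suc)
    finally show ?thesis .
  qed
qed

lemma fact_times_fps_nth_compose_neg_expm1:
  "fact n * fps_nth (a oo - fps_expm1) n
     = (\<Sum>i=0..n. of_nat (Stirling n i) * fact i * fps_nth a i * (-1) ^ i)"
  for a :: "'a::field_char_0 fps"
proof -
  have "(-1 :: 'a fps) = fps_const (-1)"
    by simp
  then have "(-1 :: 'a fps) ^ i = fps_const ((-1) ^ i)" for i
    by (simp only: fps_const_power)
  then have "fps_nth ((- fps_expm1) ^ i :: 'a fps) n = (-1) ^ i * fps_nth (fps_expm1 ^ i) n" for i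
    by (simp only: power_minus[of fps_expm1] fps_mult_left_const_nth)
  then show ?thesis
    by (simp add: fps_compose_nth fps_nth_expm1_power sum_distrib_left mult_ac)
qed

lemma fps_compose_neg_expm1_one_minus_X:
  "(1 - fps_X) oo - fps_expm1 = (1 + fps_expm1 :: 'a::field_char_0 fps)"
  by (simp add: fps_compose_sub_distrib)

lemma fps_deriv_compose_neg_expm1:
  "fps_deriv (a oo - fps_expm1) = - ((1 + fps_expm1) * (fps_deriv a oo - fps_expm1))"
  for a :: "'a::field_char_0 fps"
  by (simp add: fps_compose_deriv fps_deriv_expm1 mult.commute) (simp add: ring_distribs)

lemma fps_deriv_compose_neg_expm1_alt:
  "fps_deriv (a oo - fps_expm1) = - (((1 - fps_X) * fps_deriv a) oo - fps_expm1)"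
  for a :: "'a::field_char_0 fps"
  by (simp add: fps_deriv_compose_neg_expm1 fps_compose_mult_distrib
      flip: fps_compose_neg_expm1_one_minus_X)

lemma fps_compose_neg_expm1_times_X:
  "(fps_X * a) oo - fps_expm1 = - fps_expm1 * (a oo - fps_expm1)"
  for a :: "'a::field_char_0 fps"
  by (simp add: fps_compose_mult_distrib)

definition bernoulli_fps :: "'a::field_char_0 fps" where
  "bernoulli_fps = fps_X / fps_expm1"

lemma bernoulli_num_conv_fps: "bernoulli_num n = fact n * fps_nth bernoulli_fps n"
  by (simp add: bernoulli_num_def bernoulli_fps_def fps_expm1_def)

lemma fps_expm1_times_bernoulli_fps: "fps_expm1 * bernoulli_fps = (fps_X :: 'a::field_char_0 fps)"
proof -
  have "subdegree (fps_expm1 :: 'a fps) \<le> 1"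
    by (rule subdegree_leI) (simp add: fps_expm1_def)
  then have "fps_X / fps_expm1 * fps_expm1 = (fps_X :: 'a fps)"
    using fps_expm1_nonzero by (intro fps_times_divide_eq) auto
  then show ?thesis
    by (simp add: bernoulli_fps_def mult.commute)
qed

text \<open>Since 1/0 = 0, the series Abs_fps (\<lambda>k. 1 / of_nat k) is -ln(1 - z).\<close>

lemma Abs_fps_inverse_compose_neg_expm1:
  "Abs_fps (\<lambda>k. 1 / of_nat k) oo - fps_expm1 = (- fps_X :: 'a::field_char_0 fps)"
proof -
  have "(1 - fps_X) * fps_deriv (Abs_fps (\<lambda>k. 1 / of_nat k)) = (1 :: 'a fps)"
  proof -
    have "fps_deriv (Abs_fps (\<lambda>k. 1 / of_nat k)) = (Abs_fps (\<lambda>_. 1) :: 'a fps)"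
      by (rule fps_ext) (simp del: of_nat_Suc)
    then show ?thesis
      by (intro fps_ext) (simp add: algebra_simps fps_sub_nth)
  qed
  then have "fps_deriv (Abs_fps (\<lambda>k. 1 / of_nat k) oo - fps_expm1) = fps_deriv (- fps_X :: 'a fps)"
    by (simp add: fps_deriv_compose_neg_expm1_alt)
  then show ?thesis
    by (simp only: fps_deriv_eq_iff) simp
qed

lemma Abs_fps_inverse_Suc_compose_neg_expm1:
  "Abs_fps (\<lambda>k. 1 / (of_nat k + 1)) oo - fps_expm1 = (bernoulli_fps :: 'a::field_char_0 fps)"
proof -
  have "fps_X * Abs_fps (\<lambda>k. 1 / (of_nat k + 1)) = (Abs_fps (\<lambda>k. 1 / of_nat k) :: 'a fps)"
    by (rule fps_ext) (simp add: of_nat_diff)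
  then have "- fps_expm1 * (Abs_fps (\<lambda>k. 1 / (of_nat k + 1)) oo - fps_expm1) = (- fps_X :: 'a fps)"
    by (simp only: fps_compose_neg_expm1_times_X [symmetric] Abs_fps_inverse_compose_neg_expm1)
  then have "fps_expm1 * (Abs_fps (\<lambda>k. 1 / (of_nat k + 1)) oo - fps_expm1)
      = fps_expm1 * (bernoulli_fps :: 'a fps)"
    by (simp add: fps_expm1_times_bernoulli_fps)
  then show ?thesis
    by (metis fps_expm1_nonzero mult_left_cancel)
qed

lemma Abs_fps_harm_over_Suc_compose_neg_expm1:
  "Abs_fps (\<lambda>k. harm k / (of_nat k + 1)) oo - fps_expm1
     = - fps_const (1/2) * fps_X * (bernoulli_fps :: real fps)"
proof -
  define D :: "real fps" where "D = Abs_fps (\<lambda>k. harm k / (of_nat k + 1))"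
  have "(1 - fps_X) * fps_deriv (fps_X * D) = Abs_fps (\<lambda>k. 1 / of_nat k)"
  proof -
    have "fps_deriv (fps_X * D) = Abs_fps harm"
    proof (rule fps_ext)
      fix n
      have "(1 + real n) * fps_nth D n = harm n"
        by (simp add: D_def field_simps)
      then show "fps_nth (fps_deriv (fps_X * D)) n = fps_nth (Abs_fps harm) n"
        by (simp add: algebra_simps D_def flip: add_divide_distrib)
    qed
    moreover have "(1 - fps_X) * Abs_fps harm = Abs_fps (\<lambda>k. 1 / of_nat k :: real)"
    proof (rule fps_ext)
      fix n
      show "fps_nth ((1 - fps_X) * Abs_fps harm) n = fps_nth (Abs_fps (\<lambda>k. 1 / of_nat k :: real)) n"
        by (cases n) (simp_all add: algebra_simps harm_Suc divide_inverse harm_def del: of_nat_Suc)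
    qed
    ultimately show ?thesis by simp
  qed
  then have "fps_deriv ((fps_X * D) oo - fps_expm1) = fps_deriv (fps_const (1/2) * fps_X ^ 2)"
    by (simp add: fps_deriv_compose_neg_expm1_alt Abs_fps_inverse_compose_neg_expm1 fps_deriv_power'
        fps_numeral_nth)
  then have "(fps_X * D) oo - fps_expm1 = fps_const (1/2) * fps_X ^ 2"
    by (simp only: fps_deriv_eq_iff) simp
  also have "\<dots> = fps_const (1/2) * fps_X * (fps_expm1 * bernoulli_fps)"
    by (simp add: fps_expm1_times_bernoulli_fps power2_eq_square mult.assoc)
  also have "\<dots> = - fps_expm1 * (- fps_const (1/2) * fps_X * bernoulli_fps)"
    by (simp only: mult_minus_left mult_minus_right minus_minus mult_ac)
  finally have "- fps_expm1 * (D oo - fps_expm1) = - fps_expm1 * (- fps_const (1/2) * fps_X * bernoulli_fps)"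
    by (simp only: fps_compose_neg_expm1_times_X)
  then show ?thesis
    unfolding D_def by (metis fps_expm1_nonzero mult_left_cancel neg_equal_0_iff_equal)
qed

lemma fps_deriv_Abs_fps_harm_over_pronic_compose_neg_expm1:
  "fps_deriv (Abs_fps (\<lambda>k. harm k / (of_nat k * (of_nat k + 1))) oo - fps_expm1)
     = fps_const (1/2) * (fps_X * fps_deriv bernoulli_fps - (bernoulli_fps :: real fps))"
proof -
  define E :: "real fps" where "E = Abs_fps (\<lambda>k. harm k / (of_nat k * (of_nat k + 1)))"
  define c :: "real fps" where "c = fps_const (1/2)"
  have "fps_X * fps_deriv E = Abs_fps (\<lambda>k. harm k / (of_nat k + 1))"
  proof (rule fps_ext)
    fix k
    show "fps_nth (fps_X * fps_deriv E) k = fps_nth (Abs_fps (\<lambda>k. harm k / (of_nat k + 1))) k"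
      by (cases k) (simp_all add: E_def harm_expand(1) del: of_nat_Suc)
  qed
  then have "- fps_expm1 * (fps_deriv E oo - fps_expm1) = - fps_const (1/2) * fps_X * bernoulli_fps"
    by (simp only: fps_compose_neg_expm1_times_X [symmetric] Abs_fps_harm_over_Suc_compose_neg_expm1)
  then have E': "fps_expm1 * (fps_deriv E oo - fps_expm1) = c * fps_X * bernoulli_fps"
    by (simp only: mult_minus_left neg_equal_iff_equal c_def)
  have B': "fps_expm1 * fps_deriv bernoulli_fps = 1 - (1 + fps_expm1) * (bernoulli_fps :: real fps)"
  proof -
    have "fps_deriv (fps_expm1 * bernoulli_fps) = (fps_deriv fps_X :: real fps)"
      by (simp only: fps_expm1_times_bernoulli_fps)
    then show ?thesis
      by (simp add: fps_deriv_expm1 algebra_simps)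
  qed
  have "fps_expm1 * fps_deriv (E oo - fps_expm1)
      = - ((1 + fps_expm1) * (fps_expm1 * (fps_deriv E oo - fps_expm1)))"
    by (simp add: fps_deriv_compose_neg_expm1 algebra_simps)
  also have "\<dots> = c * (fps_X * (1 - (1 + fps_expm1) * bernoulli_fps) - fps_X)"
    by (simp add: E' algebra_simps)
  also have "\<dots> = c * (fps_X * (fps_expm1 * fps_deriv bernoulli_fps) - fps_expm1 * bernoulli_fps)"
    by (simp only: B' fps_expm1_times_bernoulli_fps)
  also have "\<dots> = fps_expm1 * (c * (fps_X * fps_deriv bernoulli_fps - bernoulli_fps))"
    by (simp add: algebra_simps)
  finally show ?thesis
    unfolding E_def c_def by (metis fps_expm1_nonzero mult_left_cancel)
qed

lemma bernoulli_num_eq_Stirling_sum: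
  "bernoulli_num n = (\<Sum>k=0..n. real (Stirling n k) * fact k * (-1) ^ k / (real k + 1))"
proof -
  have "bernoulli_num n = fact n * fps_nth (Abs_fps (\<lambda>k. 1 / (of_nat k + 1)) oo - fps_expm1) n"
    by (simp add: Abs_fps_inverse_Suc_compose_neg_expm1 bernoulli_num_conv_fps)
  also have "\<dots> = (\<Sum>k=0..n. real (Stirling n k) * fact k * (-1) ^ k / (real k + 1))"
    unfolding fact_times_fps_nth_compose_neg_expm1 by (intro sum.cong) auto
  finally show ?thesis .
qed

lemma Stirling_harm_sum_eq_bernoulli_num:
  "(\<Sum>k=0..Suc n. real (Stirling (Suc n) k) * fact k * harm k * (-1) ^ k / (real k + 1))
     = - (real (Suc n) / 2) * bernoulli_num n"
proof -
  have "(\<Sum>k=0..Suc n. real (Stirling (Suc n) k) * fact k * harm k * (-1) ^ k / (real k + 1))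
      = fact (Suc n) * fps_nth (Abs_fps (\<lambda>k. harm k / (of_nat k + 1)) oo - fps_expm1) (Suc n)"
    unfolding fact_times_fps_nth_compose_neg_expm1 by (intro sum.cong) auto
  also have "\<dots> = - (real (Suc n) / 2) * bernoulli_num n"
    by (simp add: Abs_fps_harm_over_Suc_compose_neg_expm1 bernoulli_num_conv_fps mult.assoc
        del: of_nat_Suc)
  finally show ?thesis .
qed

lemma Stirling_harm_pronic_sum_eq_bernoulli_num:
  "(\<Sum>k=0..Suc n. real (Stirling (Suc n) k) * fact k * harm k * (-1) ^ k / (real k * (real k + 1)))
     = (real n - 1) / 2 * bernoulli_num n"
proof -
  define e :: real
    where "e = fps_nth (Abs_fps (\<lambda>k. harm k / (of_nat k * (of_nat k + 1))) oo - fps_expm1) (Suc n)"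
  have "real (Suc n) * e = (real n - 1) / 2 * fps_nth bernoulli_fps n"
    using arg_cong[OF fps_deriv_Abs_fps_harm_over_pronic_compose_neg_expm1, of "\<lambda>f. fps_nth f n"]
    unfolding e_def by (cases n) (simp_all add: algebra_simps del: of_nat_Suc)
  then have "fact (Suc n) * e = (real n - 1) / 2 * bernoulli_num n"
    by (simp add: bernoulli_num_conv_fps fact_Suc mult_ac del: of_nat_Suc)
  moreover have "fact (Suc n) * e
      = (\<Sum>k=0..Suc n. real (Stirling (Suc n) k) * fact k * harm k * (-1) ^ k / (real k * (real k + 1)))"
    unfolding e_def fact_times_fps_nth_compose_neg_expm1 by (intro sum.cong) auto
  ultimately show ?thesis by simp
qed

definition wgeom_poly :: "(nat \<Rightarrow> real) \<Rightarrow> nat \<Rightarrow> real \<Rightarrow> real" where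
  "wgeom_poly c n y = (\<Sum>k=0..n. real (Stirling n k) * fact k * c k * y ^ k)"

definition wgeom_poly_deriv :: "(nat \<Rightarrow> real) \<Rightarrow> nat \<Rightarrow> real \<Rightarrow> real" where
  "wgeom_poly_deriv c n y = (\<Sum>k=0..n. real (Stirling n k) * fact k * c k * (of_nat k * y ^ (k - 1)))"

lemma geom_poly_eq_wgeom_poly: "geom_poly = wgeom_poly (\<lambda>_. 1)"
  by (simp add: fun_eq_iff geom_poly_def wgeom_poly_def)

lemma harm_geom_poly_eq_wgeom_poly: "harm_geom_poly = wgeom_poly harm"
proof (intro ext)
  fix n y
  have "wgeom_poly harm n y = (\<Sum>k\<in>insert 0 {1..n}. real (Stirling n k) * fact k * harm k * y ^ k)"
    unfolding wgeom_poly_def by (intro sum.cong) auto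
  also have "\<dots> = harm_geom_poly n y"
    by (subst sum.insert) (auto simp: harm_geom_poly_def harm_expand(1))
  finally show "harm_geom_poly n y = wgeom_poly harm n y" ..
qed

definition weight_diff :: "(nat \<Rightarrow> real) \<Rightarrow> nat \<Rightarrow> real" where
  "weight_diff c k = of_nat (Suc k) * (c (Suc k) - c k)"

lemma weight_diff_const [simp]: "weight_diff (\<lambda>_. a) = (\<lambda>_. 0)"
  by (simp add: fun_eq_iff weight_diff_def)

lemma weight_diff_harm: "weight_diff harm = (\<lambda>_. 1)"
  by (simp add: fun_eq_iff weight_diff_def harm_Suc del: of_nat_Suc)

lemma wgeom_poly_0 [simp]: "wgeom_poly c 0 y = c 0"
  by (simp add: wgeom_poly_def)

lemma wgeom_poly_zero [simp]: "wgeom_poly (\<lambda>_. 0) n y = 0"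
  by (simp add: wgeom_poly_def)

lemma geom_poly_0 [simp]: "geom_poly 0 y = 1"
  by (simp add: geom_poly_eq_wgeom_poly)

lemma geom_poly_Suc_0 [simp]: "geom_poly (Suc 0) y = y"
  by (simp add: geom_poly_def)

lemma has_real_derivative_wgeom_poly [derivative_intros]:
  assumes "(g has_real_derivative g') (at x)"
  shows "((\<lambda>x. wgeom_poly c n (g x)) has_real_derivative wgeom_poly_deriv c n (g x) * g') (at x)"
proof -
  have "(wgeom_poly c n has_real_derivative wgeom_poly_deriv c n y) (at y)" for y
    unfolding wgeom_poly_def wgeom_poly_deriv_def
    by (auto intro!: derivative_eq_intros sum.cong simp: mult_ac)
  then show ?thesis
    using DERIV_chain2 assms by blast
qed

lemma continuous_on_wgeom_poly [continuous_intros]: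
  "continuous_on S g \<Longrightarrow> continuous_on S (\<lambda>x. wgeom_poly c n (g x))"
  unfolding wgeom_poly_def by (intro continuous_intros)

lemma continuous_on_geom_poly [continuous_intros]:
  "continuous_on S g \<Longrightarrow> continuous_on S (\<lambda>x. geom_poly n (g x))"
  unfolding geom_poly_eq_wgeom_poly by (rule continuous_on_wgeom_poly)

lemma continuous_on_harm_geom_poly [continuous_intros]:
  "continuous_on S g \<Longrightarrow> continuous_on S (\<lambda>x. harm_geom_poly n (g x))"
  unfolding harm_geom_poly_eq_wgeom_poly by (rule continuous_on_wgeom_poly)

lemma wgeom_poly_Suc_Stirling:
  "wgeom_poly c (Suc n) y = (\<Sum>k=0..n. real (Stirling n k)
     * (of_nat k * fact k * c k * y ^ k + fact (Suc k) * c (Suc k) * y ^ Suc k))"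
proof -
  have "wgeom_poly c (Suc n) y
      = (\<Sum>k=0..n. real (Stirling (Suc n) (Suc k)) * fact (Suc k) * c (Suc k) * y ^ Suc k)"
    unfolding wgeom_poly_def by (subst sum.atLeast0_atMost_Suc_shift) simp
  also have "\<dots> = (\<Sum>k=0..n. of_nat (Suc k) * real (Stirling n (Suc k))
                                * fact (Suc k) * c (Suc k) * y ^ Suc k)
      + (\<Sum>k=0..n. real (Stirling n k) * fact (Suc k) * c (Suc k) * y ^ Suc k)"
    unfolding sum.distrib [symmetric] by (intro sum.cong) (simp_all add: algebra_simps)
  also have "(\<Sum>k=0..n. of_nat (Suc k) * real (Stirling n (Suc k)) * fact (Suc k) * c (Suc k) * y ^ Suc k)
      = (\<Sum>k=0..n. of_nat k * real (Stirling n k) * fact k * c k * y ^ k)"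
  proof -
    have "(\<Sum>k=0..n. of_nat k * real (Stirling n k) * fact k * c k * y ^ k)
        = (\<Sum>k=0..Suc n. of_nat k * real (Stirling n k) * fact k * c k * y ^ k)"
      by (simp add: sum.atLeast0_atMost_Suc)
    then show ?thesis
      by (subst (asm) sum.atLeast0_atMost_Suc_shift) simp
  qed
  also have "\<dots> + (\<Sum>k=0..n. real (Stirling n k) * fact (Suc k) * c (Suc k) * y ^ Suc k)
      = (\<Sum>k=0..n. real (Stirling n k)
          * (of_nat k * fact k * c k * y ^ k + fact (Suc k) * c (Suc k) * y ^ Suc k))"
    unfolding sum.distrib [symmetric] by (intro sum.cong) (simp_all add: algebra_simps)
  finally show ?thesis .
qed

lemma wgeom_poly_Suc:
  "wgeom_poly c (Suc n) y
     = y * ((1 + y) * wgeom_poly_deriv c n y + wgeom_poly c n y) + y * wgeom_poly (weight_diff c) n y"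
  unfolding wgeom_poly_Suc_Stirling
  unfolding wgeom_poly_def wgeom_poly_deriv_def weight_diff_def sum_distrib_left distrib_left
    sum.distrib [symmetric]
proof (intro sum.cong refl)
  fix k
  let ?s = "real (Stirling n k)"
  have "y * ((1 + y) * (?s * fact k * c k * (of_nat k * y ^ (k - 1))))
      = (1 + y) * (?s * fact k * c k) * (y * (of_nat k * y ^ (k - 1)))"
    by (simp only: mult_ac)
  also have "y * (of_nat k * y ^ (k - 1)) = of_nat k * y ^ k"
    by (cases k) auto
  finally show "?s * (of_nat k * fact k * c k * y ^ k) + ?s * (fact (Suc k) * c (Suc k) * y ^ Suc k)
      = y * ((1 + y) * (?s * fact k * c k * (of_nat k * y ^ (k - 1))))
        + y * (?s * fact k * c k * y ^ k)
        + y * (?s * fact k * (of_nat (Suc k) * (c (Suc k) - c k)) * y ^ k)"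
    by (simp add: algebra_simps fact_Suc)
qed

lemma has_real_derivative_one_minus_x_wgeom_poly:
  "\<exists>D. ((\<lambda>x. (1 - x) * wgeom_poly c n (- x)) has_real_derivative D) (at x) \<and>
       x * D = wgeom_poly c (Suc n) (- x) + x * wgeom_poly (weight_diff c) n (- x)"
proof (intro exI conjI)
  show "((\<lambda>x. (1 - x) * wgeom_poly c n (- x)) has_real_derivative
      - (wgeom_poly c n (- x) + (1 - x) * wgeom_poly_deriv c n (- x))) (at x)"
    by (rule derivative_eq_intros refl)+ (simp add: algebra_simps)
  show "x * - (wgeom_poly c n (- x) + (1 - x) * wgeom_poly_deriv c n (- x))
      = wgeom_poly c (Suc n) (- x) + x * wgeom_poly (weight_diff c) n (- x)"
    using wgeom_poly_Suc[of c n "- x"] by (simp add: algebra_simps)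
qed

lemma has_real_derivative_x_geom_poly:
  "\<exists>D. ((\<lambda>x. x * geom_poly n (x - 1)) has_real_derivative D) (at x) \<and>
       (x - 1) * D = geom_poly (Suc n) (x - 1)"
  unfolding geom_poly_eq_wgeom_poly
proof (intro exI conjI)
  show "((\<lambda>x. x * wgeom_poly (\<lambda>_. 1) n (x - 1)) has_real_derivative
      wgeom_poly (\<lambda>_. 1) n (x - 1) + x * wgeom_poly_deriv (\<lambda>_. 1) n (x - 1)) (at x)"
    by (rule derivative_eq_intros refl)+ (simp add: algebra_simps)
  show "(x - 1) * (wgeom_poly (\<lambda>_. 1) n (x - 1) + x * wgeom_poly_deriv (\<lambda>_. 1) n (x - 1))
      = wgeom_poly (\<lambda>_. 1) (Suc n) (x - 1)"
    using wgeom_poly_Suc[of "\<lambda>_. 1" n "x - 1"] by (simp add: algebra_simps)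
qed

lemma geom_poly_reflect:
  "x * geom_poly (Suc k) (x - 1) = (-1) ^ k * ((1 - x) * geom_poly (Suc k) (- x))"
proof (induction k arbitrary: x)
  case 0
  then show ?case by (simp add: algebra_simps)
next
  case (Suc k)
  obtain DM where DM: "((\<lambda>x. x * geom_poly (Suc k) (x - 1)) has_real_derivative DM) (at x)"
    and DM_eq: "(x - 1) * DM = geom_poly (Suc (Suc k)) (x - 1)"
    using has_real_derivative_x_geom_poly by blast
  obtain DW where DW: "((\<lambda>x. (1 - x) * geom_poly (Suc k) (- x)) has_real_derivative DW) (at x)"
    and DW_eq: "x * DW = geom_poly (Suc (Suc k)) (- x)"
    using has_real_derivative_one_minus_x_wgeom_poly[of "\<lambda>_. 1" "Suc k" x]
    by (auto simp: geom_poly_eq_wgeom_poly)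
  txt \<open>By the induction hypothesis DM and DW are derivatives of the same function up to sign.\<close>
  have "((\<lambda>x. x * geom_poly (Suc k) (x - 1)) has_real_derivative (-1) ^ k * DW) (at x)"
    unfolding Suc.IH by (rule DERIV_cmult [OF DW])
  then have "DM = (-1) ^ k * DW"
    using DM DERIV_unique by blast
  then have "x * geom_poly (Suc (Suc k)) (x - 1) = (-1) ^ k * (x - 1) * (x * DW)"
    by (simp add: DM_eq [symmetric] algebra_simps)
  also have "\<dots> = (-1) ^ k * (x - 1) * geom_poly (Suc (Suc k)) (- x)"
    by (simp only: DW_eq)
  finally show ?case
    by (simp add: algebra_simps)
qed

lemma has_integral_power_unit_interval: "((\<lambda>x::real. x ^ k) has_integral (1 / (real k + 1))) {0..1}"
proof -
  have "((\<lambda>x::real. x ^ k) has_integral (1 ^ Suc k / (real k + 1) - 0 ^ Suc k / (real k + 1))) {0..1}"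
  proof (rule fundamental_theorem_of_calculus)
    fix x :: real
    have "((\<lambda>x. x ^ Suc k / (real k + 1)) has_real_derivative x ^ k) (at x)"
      using DERIV_cdivide [OF DERIV_pow [of "Suc k" x], of "real k + 1"]
      by (rule DERIV_cong) (simp add: field_simps)
    then show "((\<lambda>x. x ^ Suc k / (real k + 1)) has_vector_derivative x ^ k) (at x within {0..1})"
      by (simp add: has_real_derivative_iff_has_vector_derivative [symmetric] has_field_derivative_at_within)
  qed simp
  then show ?thesis by simp
qed

lemma integral_eq_if_difference_is_derivative:
  fixes F g h :: "real \<Rightarrow> real"
  assumes "\<And>x. (F has_real_derivative (g x - h x)) (at x)" and "F 0 = F 1"
    and "continuous_on {0..1} g" and "continuous_on {0..1} h"
  shows "integral {0..1} g = integral {0..1} h"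
proof -
  have "((\<lambda>x. g x - h x) has_integral (F 1 - F 0)) {0..1}"
    by (rule fundamental_theorem_of_calculus)
       (auto simp: has_real_derivative_iff_has_vector_derivative [symmetric] intro: DERIV_subset assms(1))
  then have "integral {0..1} (\<lambda>x. g x - h x) = 0"
    using assms(2) by (simp add: integral_unique)
  moreover have "integral {0..1} (\<lambda>x. g x - h x) = integral {0..1} g - integral {0..1} h"
    by (intro integral_diff integrable_continuous_interval assms)
  ultimately show ?thesis by simp
qed

lemma integral_reflect_unit_interval:
  fixes f :: "real \<Rightarrow> real"
  assumes "continuous_on {0..1} f"
  shows "integral {0..1} (\<lambda>x. f (1 - x)) = integral {0..1} f"
proof -
  have "(f has_integral integral {0..1} f) (cbox 0 1)"
    using integrable_continuous_interval[OF assms] by (simp add: has_integral_integral)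
  moreover have "(\<lambda>x. (1 / (-1)) *\<^sub>R x + - ((1 / (-1)) *\<^sub>R (1::real))) ` cbox 0 1 = {0..1}"
    by (auto simp: image_iff intro!: bexI[of _ "1 - x" for x])
  ultimately have "((\<lambda>x. f ((-1) *\<^sub>R x + 1)) has_integral integral {0..1} f) {0..1}"
    using has_integral_affinity[of f _ 0 1 "-1" 1] by simp
  then show ?thesis by (simp add: integral_unique)
qed

lemma has_integral_wgeom_poly_neg:
  "((\<lambda>x. wgeom_poly c n (- x)) has_integral
     (\<Sum>k=0..n. real (Stirling n k) * fact k * c k * (-1) ^ k / (real k + 1))) {0..1}"
proof -
  have "((\<lambda>x. \<Sum>k=0..n. (real (Stirling n k) * fact k * c k * (-1) ^ k) * x ^ k) has_integral
      (\<Sum>k=0..n. (real (Stirling n k) * fact k * c k * (-1) ^ k) * (1 / (real k + 1)))) {0..1}"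
    by (intro has_integral_sum has_integral_mult_right has_integral_power_unit_interval) auto
  moreover have "wgeom_poly c n (- x)
      = (\<Sum>k=0..n. (real (Stirling n k) * fact k * c k * (-1) ^ k) * x ^ k)" for x :: real
    by (simp add: wgeom_poly_def power_minus [of x] mult_ac)
  ultimately show ?thesis
    by simp
qed

lemma has_integral_one_minus_x_over_x_wgeom_poly_neg:
  assumes "c 0 = 0"
  shows "((\<lambda>x. (1 - x) / x * wgeom_poly c n (- x)) has_integral
     (\<Sum>k=0..n. real (Stirling n k) * fact k * c k * (-1) ^ k / (real k * (real k + 1)))) {0..1}"
proof -
  define a where "a k = real (Stirling n k) * fact k * c k * (-1) ^ k" for k
  have int_g: "((\<lambda>x. \<Sum>k=0..n. a k * (x ^ (k - 1) - x ^ k)) has_integral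
      (\<Sum>k=0..n. a k * (1 / (real k * (real k + 1))))) {0..1}" (is "(?g has_integral _) _")
  proof (intro has_integral_sum has_integral_mult_right)
    fix k assume "k \<in> {0..n}"
    show "((\<lambda>x. x ^ (k - 1) - x ^ k) has_integral 1 / (real k * (real k + 1))) {0..1}"
    proof (cases k)
      case (Suc j)
      have "((\<lambda>x. x ^ j - x ^ Suc j) has_integral (1 / (real j + 1) - 1 / (real (Suc j) + 1))) {0..1}"
        by (intro has_integral_diff has_integral_power_unit_interval)
      moreover have "1 / (real j + 1) - 1 / (real (Suc j) + 1) = 1 / (real k * (real k + 1))"
        using Suc by (simp add: field_simps)
      ultimately show ?thesis
        using Suc by simp
    qed simp
  qed simp
  have eq: "(1 - x) / x * wgeom_poly c n (- x) = ?g x" if "x \<in> {0..1} - {0}" for x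
    unfolding wgeom_poly_def sum_distrib_left
  proof (intro sum.cong refl)
    fix k
    have "(1 - x) / x * (real (Stirling n k) * fact k * c k * (- x) ^ k) = a k * ((1 - x) / x * x ^ k)"
      by (simp add: a_def power_minus [of x] mult_ac)
    also have "\<dots> = a k * (x ^ (k - 1) - x ^ k)"
    proof (cases k)
      case 0
      then show ?thesis using assms by (simp add: a_def)
    next
      case (Suc j)
      then show ?thesis using that by (simp add: field_simps)
    qed
    finally show "(1 - x) / x * (real (Stirling n k) * fact k * c k * (- x) ^ k)
        = a k * (x ^ (k - 1) - x ^ k)" .
  qed
  have "((\<lambda>x. (1 - x) / x * wgeom_poly c n (- x)) has_integral
      (\<Sum>k=0..n. a k * (1 / (real k * (real k + 1))))) {0..1}"
    by (rule has_integral_spike_finite [of "{0}", OF _ eq int_g]) simp_all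
  then show ?thesis
    by (simp add: a_def)
qed

lemma integral_geom_poly_neg: "integral {0..1} (\<lambda>x. geom_poly n (- x)) = bernoulli_num n"
  using has_integral_wgeom_poly_neg [of "\<lambda>_. 1" n]
  by (simp add: geom_poly_eq_wgeom_poly bernoulli_num_eq_Stirling_sum integral_unique)

lemma integral_harm_geom_poly_neg:
  "integral {0..1} (\<lambda>x. harm_geom_poly (Suc n) (- x)) = - (real (Suc n) / 2) * bernoulli_num n"
  unfolding harm_geom_poly_eq_wgeom_poly Stirling_harm_sum_eq_bernoulli_num [symmetric]
  by (rule integral_unique [OF has_integral_wgeom_poly_neg])

lemma has_real_derivative_wgeom_poly_geom_poly_product:
  "((\<lambda>x. - ((1 - x) * wgeom_poly c a (- x) * (x * geom_poly b (x - 1)))) has_real_derivative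
      wgeom_poly c a (- x) * geom_poly (Suc b) (x - 1)
      - (wgeom_poly c (Suc a) (- x) + x * wgeom_poly (weight_diff c) a (- x)) * geom_poly b (x - 1)) (at x)"
proof -
  obtain DW where DW: "((\<lambda>x. (1 - x) * wgeom_poly c a (- x)) has_real_derivative DW) (at x)"
    and DW_eq: "x * DW = wgeom_poly c (Suc a) (- x) + x * wgeom_poly (weight_diff c) a (- x)"
    using has_real_derivative_one_minus_x_wgeom_poly by blast
  obtain DM where DM: "((\<lambda>x. x * geom_poly b (x - 1)) has_real_derivative DM) (at x)"
    and DM_eq: "(x - 1) * DM = geom_poly (Suc b) (x - 1)"
    using has_real_derivative_x_geom_poly by blast
  have "- (DW * (x * geom_poly b (x - 1)) + DM * ((1 - x) * wgeom_poly c a (- x)))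
      = wgeom_poly c a (- x) * ((x - 1) * DM) - (x * DW) * geom_poly b (x - 1)"
    by (simp add: algebra_simps)
  also have "\<dots> = wgeom_poly c a (- x) * geom_poly (Suc b) (x - 1)
      - (wgeom_poly c (Suc a) (- x) + x * wgeom_poly (weight_diff c) a (- x)) * geom_poly b (x - 1)"
    by (simp only: DW_eq DM_eq)
  finally show ?thesis
    by (rule DERIV_cong [OF DERIV_minus [OF DERIV_mult [OF DW DM]]])
qed

lemma integral_wgeom_poly_geom_poly_shift:
  "integral {0..1} (\<lambda>x. wgeom_poly c a (- x) * geom_poly (Suc b) (x - 1))
   = integral {0..1} (\<lambda>x. wgeom_poly c (Suc a) (- x) * geom_poly b (x - 1))
     + integral {0..1} (\<lambda>x. x * wgeom_poly (weight_diff c) a (- x) * geom_poly b (x - 1))"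
proof -
  have "integral {0..1} (\<lambda>x. wgeom_poly c a (- x) * geom_poly (Suc b) (x - 1))
      = integral {0..1} (\<lambda>x. (wgeom_poly c (Suc a) (- x) + x * wgeom_poly (weight_diff c) a (- x))
                               * geom_poly b (x - 1))"
    by (rule integral_eq_if_difference_is_derivative [OF has_real_derivative_wgeom_poly_geom_poly_product])
       (auto intro!: continuous_intros)
  also have "\<dots> = integral {0..1} (\<lambda>x. wgeom_poly c (Suc a) (- x) * geom_poly b (x - 1)
                                + x * wgeom_poly (weight_diff c) a (- x) * geom_poly b (x - 1))"
    by (simp only: distrib_right)
  also have "\<dots> = integral {0..1} (\<lambda>x. wgeom_poly c (Suc a) (- x) * geom_poly b (x - 1))
      + integral {0..1} (\<lambda>x. x * wgeom_poly (weight_diff c) a (- x) * geom_poly b (x - 1))"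
    by (intro integral_add integrable_continuous_interval continuous_intros)
  finally show ?thesis .
qed

lemma integral_geom_poly_product:
  "integral {0..1} (\<lambda>x. geom_poly a (- x) * geom_poly b (x - 1)) = bernoulli_num (a + b)"
proof (induction a arbitrary: b)
  case 0
  have "integral {0..1} (\<lambda>x. geom_poly b (- (1 - x)))
      = integral {0..1} (\<lambda>x. geom_poly b (- x))"
    by (rule integral_reflect_unit_interval [of "\<lambda>x. geom_poly b (- x)"])
       (auto intro!: continuous_intros)
  then show ?case
    by (simp add: integral_geom_poly_neg)
next
  case (Suc a)
  then show ?case
    using integral_wgeom_poly_geom_poly_shift [of "\<lambda>_. 1" a b]
    by (simp add: geom_poly_eq_wgeom_poly)
qed

lemma integral_geom_poly_product_split:
  "integral {0..1} (\<lambda>x. x * geom_poly a (- x) * geom_poly c (x - 1))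
   + integral {0..1} (\<lambda>x. (1 - x) * geom_poly a (- x) * geom_poly c (x - 1)) = bernoulli_num (a + c)"
proof -
  have "integral {0..1} (\<lambda>x. x * geom_poly a (- x) * geom_poly c (x - 1))
      + integral {0..1} (\<lambda>x. (1 - x) * geom_poly a (- x) * geom_poly c (x - 1))
      = integral {0..1} (\<lambda>x. x * geom_poly a (- x) * geom_poly c (x - 1)
                              + (1 - x) * geom_poly a (- x) * geom_poly c (x - 1))"
    by (intro integral_add [symmetric] integrable_continuous_interval)
       (auto intro!: continuous_intros)
  also have "\<dots> = integral {0..1} (\<lambda>x. geom_poly a (- x) * geom_poly c (x - 1))"
    by (simp add: algebra_simps)
  finally show ?thesis
    by (simp add: integral_geom_poly_product)
qed

lemma integral_one_minus_x_geom_poly_product_reflect: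
  "integral {0..1} (\<lambda>x. (1 - x) * geom_poly a (- x) * geom_poly c (x - 1))
   = integral {0..1} (\<lambda>x. x * geom_poly a (x - 1) * geom_poly c (- x))"
proof -
  have "integral {0..1} (\<lambda>x. x * geom_poly a (x - 1) * geom_poly c (- x))
      = integral {0..1} (\<lambda>x. (\<lambda>x. (1 - x) * geom_poly a (- x) * geom_poly c (x - 1)) (1 - x))"
    by simp
  also have "\<dots> = integral {0..1} (\<lambda>x. (1 - x) * geom_poly a (- x) * geom_poly c (x - 1))"
    by (rule integral_reflect_unit_interval) (auto intro!: continuous_intros)
  finally show ?thesis ..
qed

lemma integral_one_minus_x_geom_poly_neg_eq_0:
  assumes "even a" and "a \<ge> 2"
  shows "integral {0..1} (\<lambda>x. (1 - x) * geom_poly a (- x)) = 0"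
proof -
  obtain k where a: "a = Suc k" and "odd k"
    using assms by (cases a) auto
  have "integral {0..1} (\<lambda>x. (1 - x) * geom_poly a (- x))
      = integral {0..1} (\<lambda>x. x * geom_poly a (x - 1))"
    using integral_one_minus_x_geom_poly_product_reflect [of a 0] by simp
  also have "\<dots> = integral {0..1} (\<lambda>x. - ((1 - x) * geom_poly a (- x)))"
    using \<open>odd k\<close> by (simp add: a geom_poly_reflect minus_one_power_iff)
  also have "\<dots> = - integral {0..1} (\<lambda>x. (1 - x) * geom_poly a (- x))"
    by (rule integral_neg)
  finally show ?thesis
    by simp
qed

lemma integral_x_geom_poly_neg:
  assumes "even a" and "a \<ge> 2"
  shows "integral {0..1} (\<lambda>x. x * geom_poly a (- x)) = bernoulli_num a"
  using integral_geom_poly_product_split [of a 0] integral_one_minus_x_geom_poly_neg_eq_0 [OF assms]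
  by simp

lemma integral_x_geom_poly_product:
  assumes "a \<ge> 1" and "c \<ge> 1" and "even (a + c)"
  shows "integral {0..1} (\<lambda>x. x * geom_poly a (- x) * geom_poly c (x - 1))
    = bernoulli_num (a + c) / 2"
proof -
  obtain a' c' where a: "a = Suc a'" and c: "c = Suc c'"
    using assms by (cases a; cases c) auto
  have sign: "(-1) ^ a' = ((-1) ^ c' :: real)"
    using assms(3) by (simp add: a c minus_one_power_iff)
  have swap: "(\<lambda>x. x * geom_poly a (x - 1) * geom_poly c (- x))
      = (\<lambda>x. x * geom_poly a (- x) * geom_poly c (x - 1))"
  proof
    fix x :: real
    have "x * geom_poly a (x - 1) * geom_poly c (- x)
        = (-1) ^ a' * ((1 - x) * geom_poly a (- x)) * geom_poly c (- x)"
      by (simp add: a geom_poly_reflect)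
    also have "\<dots> = geom_poly a (- x) * ((-1) ^ c' * ((1 - x) * geom_poly c (- x)))"
      by (simp add: sign mult_ac)
    also have "\<dots> = x * geom_poly a (- x) * geom_poly c (x - 1)"
      by (simp add: c geom_poly_reflect mult_ac)
    finally show "x * geom_poly a (x - 1) * geom_poly c (- x)
        = x * geom_poly a (- x) * geom_poly c (x - 1)" .
  qed
  have "integral {0..1} (\<lambda>x. (1 - x) * geom_poly a (- x) * geom_poly c (x - 1))
      = integral {0..1} (\<lambda>x. x * geom_poly a (- x) * geom_poly c (x - 1))"
    unfolding integral_one_minus_x_geom_poly_product_reflect swap ..
  then show ?thesis
    using integral_geom_poly_product_split [of a c] by linarith
qed

lemma bernoulli_num_odd_eq_0:
  assumes "odd n" and "n \<ge> 3"
  shows "bernoulli_num n = 0"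
proof -
  obtain k where n: "n = Suc k" and k: "even k" "k \<ge> 2"
    using assms by (cases n) auto
  have "bernoulli_num n = integral {0..1} (\<lambda>x. - (x * geom_poly k (x - 1)))"
    using integral_geom_poly_product [of 1 k] by (simp add: n)
  also have "\<dots> = - integral {0..1} (\<lambda>x. x * geom_poly k (x - 1))"
    by (rule integral_neg)
  also have "\<dots> = 0"
    using integral_one_minus_x_geom_poly_product_reflect [of k 0]
      integral_one_minus_x_geom_poly_neg_eq_0 [OF k]
    by simp
  finally show ?thesis .
qed

lemma integral_harm_geom_poly_product_shift:
  "integral {0..1} (\<lambda>x. harm_geom_poly a (- x) * geom_poly (Suc b) (x - 1))
   = integral {0..1} (\<lambda>x. harm_geom_poly (Suc a) (- x) * geom_poly b (x - 1))
     + integral {0..1} (\<lambda>x. x * geom_poly a (- x) * geom_poly b (x - 1))"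
  using integral_wgeom_poly_geom_poly_shift [of harm a b]
  by (simp add: harm_geom_poly_eq_wgeom_poly weight_diff_harm flip: geom_poly_eq_wgeom_poly)

lemma integral_harm_geom_poly_product_iterate:
  "integral {0..1} (\<lambda>x. harm_geom_poly a (- x) * geom_poly b (x - 1))
   = integral {0..1} (\<lambda>x. harm_geom_poly (a + b) (- x))
     + (\<Sum>i<b. integral {0..1} (\<lambda>x. x * geom_poly (a + i) (- x) * geom_poly (b - 1 - i) (x - 1)))"
proof (induction b arbitrary: a)
  case 0
  then show ?case by simp
next
  case (Suc b)
  show ?case
    unfolding integral_harm_geom_poly_product_shift Suc.IH
    by (subst sum.lessThan_Suc_shift) (simp add: add_ac)
qed

lemma sum_integral_x_geom_poly_products:
  assumes "m \<ge> 1" and "even (n + m)"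
  shows "(\<Sum>i<m. integral {0..1}
      (\<lambda>x. x * geom_poly (Suc n + i) (- x) * geom_poly (m - 1 - i) (x - 1)))
    = (real m + 1) / 2 * bernoulli_num (n + m)"
proof -
  obtain k where m: "m = Suc k"
    using assms(1) by (cases m) auto
  have "(\<Sum>i<k. integral {0..1}
          (\<lambda>x. x * geom_poly (Suc n + i) (- x) * geom_poly (m - 1 - i) (x - 1)))
      = (\<Sum>i<k. bernoulli_num (n + m) / 2)"
  proof (intro sum.cong refl)
    fix i assume "i \<in> {..<k}"
    then have "Suc n + i + (m - 1 - i) = n + m" and "m - 1 - i \<ge> 1"
      using m by auto
    then show "integral {0..1} (\<lambda>x. x * geom_poly (Suc n + i) (- x) * geom_poly (m - 1 - i) (x - 1))
        = bernoulli_num (n + m) / 2"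
      using integral_x_geom_poly_product [of "Suc n + i" "m - 1 - i"] assms(2) by simp
  qed
  moreover have "n + m \<ge> 2"
    using assms by presburger
  then have "integral {0..1} (\<lambda>x. x * geom_poly (Suc n + k) (- x) * geom_poly (m - 1 - k) (x - 1))
      = bernoulli_num (n + m)"
    using integral_x_geom_poly_neg [OF assms(2)] by (simp add: m)
  ultimately show ?thesis
    by (simp add: m field_simps)
qed

lemma integral_harm_geom_poly_product:
  assumes "m \<ge> 1" and "even (n + m)"
  shows "integral {0..1} (\<lambda>x. harm_geom_poly (Suc n) (- x) * geom_poly m (x - 1))
    = - (real n / 2) * bernoulli_num (n + m)"
  using integral_harm_geom_poly_product_iterate [of "Suc n" m] sum_integral_x_geom_poly_products [OF assms]
    integral_harm_geom_poly_neg [of "n + m"]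
  by (simp add: field_simps)

lemma has_integral_harm_geom_poly_over_x:
  "((\<lambda>x. (1 - x) / x * harm_geom_poly (n + 1) (- x))
     has_integral ((-1) ^ n * ((real n - 1) / 2) * bernoulli_num n)) {0..1}"
proof -
  have integral: "((\<lambda>x. (1 - x) / x * harm_geom_poly (Suc n) (- x))
      has_integral ((real n - 1) / 2 * bernoulli_num n)) {0..1}"
    unfolding harm_geom_poly_eq_wgeom_poly Stirling_harm_pronic_sum_eq_bernoulli_num [symmetric]
    by (rule has_integral_one_minus_x_over_x_wgeom_poly_neg) (simp add: harm_expand(1))
  have sign: "(real n - 1) / 2 * bernoulli_num n = (-1) ^ n * ((real n - 1) / 2) * bernoulli_num n"
  proof (cases "even n \<or> n = 1")
    case False
    then have "odd n" and "n \<ge> 3"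
      by presburger+
    then show ?thesis
      by (simp add: bernoulli_num_odd_eq_0)
  qed auto
  show ?thesis
    using integral unfolding sign Suc_eq_plus1 .
qed

lemma has_integral_harm_geom_poly_geom_poly_over_x:
  assumes "m \<ge> 1" and "even (n + m)"
  shows "((\<lambda>x. (1 - x) / x * harm_geom_poly (n + 1) (- x) * geom_poly m (- x))
     has_integral ((-1) ^ n * (real n / 2) * bernoulli_num (n + m))) {0..1}"
proof -
  obtain k where m: "m = Suc k"
    using assms(1) by (cases m) auto
  let ?f = "\<lambda>x. harm_geom_poly (Suc n) (- x) * geom_poly m (x - 1)"
  have int_f: "((\<lambda>x. (-1) ^ k * ?f x) has_integral (-1) ^ k * integral {0..1} ?f) {0..1}"
    by (intro has_integral_mult_right integrable_integral integrable_continuous_interval)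
       (auto intro!: continuous_intros)
  have eq: "(1 - x) / x * harm_geom_poly (n + 1) (- x) * geom_poly m (- x) = (-1) ^ k * ?f x"
    if "x \<in> {0..1} - {0}" for x
  proof -
    have "x \<noteq> 0"
      using that by auto
    have reflect: "(1 - x) * geom_poly m (- x) = (-1) ^ k * (x * geom_poly m (x - 1))"
      by (simp add: m geom_poly_reflect flip: power_add)
    have "(1 - x) / x * harm_geom_poly (n + 1) (- x) * geom_poly m (- x)
        = harm_geom_poly (Suc n) (- x) * ((1 - x) * geom_poly m (- x)) / x"
      by simp
    also have "\<dots> = harm_geom_poly (Suc n) (- x) * ((-1) ^ k * (x * geom_poly m (x - 1))) / x"
      by (simp only: reflect)
    also have "\<dots> = (-1) ^ k * ?f x"
      using \<open>x \<noteq> 0\<close> by simp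
    finally show ?thesis .
  qed
  have "((\<lambda>x. (1 - x) / x * harm_geom_poly (n + 1) (- x) * geom_poly m (- x))
      has_integral (-1) ^ k * integral {0..1} ?f) {0..1}"
    by (rule has_integral_spike_finite [of "{0}", OF _ eq int_f]) simp_all
  moreover have "(-1) ^ k * integral {0..1} ?f = (-1) ^ n * (real n / 2) * bernoulli_num (n + m)"
    using assms(2) integral_harm_geom_poly_product [OF assms] by (simp add: m minus_one_power_iff)
  ultimately show ?thesis
    by simp
qed

theorem theorem4:
  shows "(\<forall>n::nat. ((\<lambda>x::real. (1 - x) / x * harm_geom_poly (n + 1) (- x))
            has_integral ((-1) ^ n * ((real n - 1) / 2) * bernoulli_num n)) {0..1}) \<and>
    (\<forall>n m::nat. m \<ge> 1 \<longrightarrow> even (n + m) \<longrightarrow>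
          ((\<lambda>x::real. (1 - x) / x * harm_geom_poly (n + 1) (- x) * geom_poly m (- x))
            has_integral ((-1) ^ n * (real n / 2) * bernoulli_num (n + m))) {0..1})"
  by (intro conjI allI impI has_integral_harm_geom_poly_over_x has_integral_harm_geom_poly_geom_poly_over_x)

end
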